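(* Let $\mathcal{X}$ be a finite set, $P_X$ a probability distribution on $\mathcal{X}$, $\rho>0$, and let $\mathbf{X}=(X_1,\dots,X_n)$ be i.i.d. with law $P_X$. Let $\mathcal{A}$ be a nonempty countable set of agents; a strategy consists of, for each $a\in\mathcal{A}$, a (possibly random) sequence of guesses $\{\hat{\mathbf{X}}^{(a)}_k:k\ge1\}$ in $\mathcal{X}^n$ independent of $\mathbf{X}$. Let $\Pi$ be the set of bijections $\pi:\mathbb{N}^+\to\mathcal{A}\times\mathbb{N}^+$, and for $\pi(i)=(a_i,k_i)$ let $G(\mathbf{X},\pi(\hat{\mathbf{X}}_1^\infty))=\inf\{i\ge1:\hat{\mathbf{X}}^{(a_i)}_{k_i}=\mathbf{X}\}$. Let $G^*(\mathbf{X})$ be the position of $\mathbf{X}$ in the list of all elements of $\mathcal{X}^n$ sorted by decreasing probability under $P_X^{\otimes n}$ (ties broken arbitrarily). Then $$\inf_{\text{strategies}}\ \sup_{\pi\in\Pi}\ \mathbb{E}\big[G(\mathbf{X},\pi(\hat{\mathbf{X}}_1^\infty))^\rho\big]\ \ge\ \mathbb{E}\big[G^*(\mathbf{X})^\rho\big].$$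
   Context: Expectations are over $\mathbf{X}$ and the randomness of the guesses. *)

theory Defs
  imports "HOL-Probability.Probability"
begin

definition seqs :: "nat \<Rightarrow> 'x list set" where
  "seqs n = {xs. length xs = n}"

definition seq_prob :: "'x pmf \<Rightarrow> 'x list \<Rightarrow> real" where
  "seq_prob P xs = prod_list (map (pmf P) xs)"

definition orderings :: "'a set \<Rightarrow> (nat \<Rightarrow> 'a \<times> nat) set" where
  "orderings A = {\<pi>. bij_betw \<pi> {1..} (A \<times> {1..})}"

(* G(x, pi(guesses))^rho, with inf of the empty set = infinity *)
definition guesswork_pow ::
  "real \<Rightarrow> 'x list \<Rightarrow> (nat \<Rightarrow> 'a \<times> nat) \<Rightarrow> ('a \<Rightarrow> nat \<Rightarrow> 'x list) \<Rightarrow> ennreal" where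
  "guesswork_pow \<rho> x \<pi> g =
     (if \<exists>i\<ge>1. g (fst (\<pi> i)) (snd (\<pi> i)) = x
      then ennreal (real (LEAST i. i \<ge> 1 \<and> g (fst (\<pi> i)) (snd (\<pi> i)) = x) powr \<rho>)
      else \<infinity>)"

definition optimal_ranking :: "'x pmf \<Rightarrow> nat \<Rightarrow> ('x list \<Rightarrow> nat) \<Rightarrow> bool" where
  "optimal_ranking P n r \<longleftrightarrow>
     bij_betw r (seqs n :: 'x list set) {1..card (seqs n :: 'x list set)} \<and>
     (\<forall>x\<in>seqs n. \<forall>y\<in>seqs n. r x < r y \<longrightarrow> seq_prob P x \<ge> seq_prob P y)"

end

theory Submission
  imports Defs
begin

text \<open>
  Fix an ordering and a realisation of the guesses. Distinct sequences are first guessed at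
  distinct positions \<open>i \<ge> 1\<close>, and sequences that are never guessed have infinite guesswork,
  so they may be given fresh positions; hence the guesswork is at least \<open>h x powr \<rho>\<close> for an
  injective positive position map \<open>h\<close>. Among all such maps, the ranking by non-increasing
  probability minimises the expectation of any non-decreasing function of the position: writing
  that function as a telescoping sum reduces this to the fact that the \<open>j\<close> most likely
  sequences carry at least as much probability as any \<open>j\<close> sequences. The bound holds
  pointwise.
\<close>

definition nonincreasing_ranking :: "('b \<Rightarrow> 'c::order) \<Rightarrow> 'b set \<Rightarrow> ('b \<Rightarrow> nat) \<Rightarrow> bool" where
  "nonincreasing_ranking p S r \<longleftrightarrow>
     bij_betw r S {1..card S} \<and> (\<forall>x\<in>S. \<forall>y\<in>S. r x < r y \<longrightarrow> p y \<le> p x)"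

lemma sum_le_sum_of_dominating_subset:
  fixes p :: "'b \<Rightarrow> 'c::ordered_comm_monoid_add"
  assumes "finite S" "T \<subseteq> S" "R \<subseteq> S" "card T \<le> card R"
    and dominates: "\<And>x y. x \<in> R \<Longrightarrow> y \<in> S - R \<Longrightarrow> p y \<le> p x"
    and nonneg: "\<And>x. x \<in> S \<Longrightarrow> 0 \<le> p x"
  shows "sum p T \<le> sum p R"
proof -
  have fin: "finite T" "finite R"
    using assms(1-3) finite_subset by auto
  have "card (T \<inter> R) + card (T - R) \<le> card (T \<inter> R) + card (R - T)"
    using card_Int_Diff[of T R] card_Int_Diff[of R T] fin \<open>card T \<le> card R\<close>
    by (simp add: Int_commute)
  then obtain \<phi> where \<phi>: "inj_on \<phi> (T - R)" "\<phi> ` (T - R) \<subseteq> R - T"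
    using card_le_inj[of "T - R" "R - T"] fin by auto
  have "sum p (T - R) \<le> sum (p \<circ> \<phi>) (T - R)"
    using \<phi>(2) assms(2) by (intro sum_mono) (auto intro: dominates)
  also have "\<dots> = sum p (\<phi> ` (T - R))"
    using \<phi>(1) by (simp add: sum.reindex)
  also have "\<dots> \<le> sum p (R - T)"
    using \<phi>(2) fin assms(3) by (intro sum_mono2) (auto intro: nonneg)
  finally have "sum p (T - R) \<le> sum p (R - T)" .
  then show ?thesis
    using sum.Int_Diff[of T p R] sum.Int_Diff[of R p T] fin
    by (simp add: Int_commute add_left_mono)
qed

lemma head_sum_le_ranked_head_sum:
  fixes p :: "'b \<Rightarrow> 'c::ordered_comm_monoid_add"
  assumes rank: "nonincreasing_ranking p S r" and "finite S"
    and nonneg: "\<And>x. x \<in> S \<Longrightarrow> 0 \<le> p x"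
    and "inj_on g S" and g_pos: "\<And>x. x \<in> S \<Longrightarrow> 1 \<le> g x"
  shows "(\<Sum>x\<in>{x\<in>S. g x \<le> j}. p x) \<le> (\<Sum>x\<in>{x\<in>S. r x \<le> j}. p x)"
proof (rule sum_le_sum_of_dominating_subset[OF \<open>finite S\<close>])
  have r_bij: "bij_betw r S {1..card S}"
    using rank by (simp add: nonincreasing_ranking_def)
  have "r ` {x\<in>S. r x \<le> j} = {1..min (card S) j}"
  proof
    show "r ` {x\<in>S. r x \<le> j} \<subseteq> {1..min (card S) j}"
      using bij_betwE[OF r_bij] by auto
    show "{1..min (card S) j} \<subseteq> r ` {x\<in>S. r x \<le> j}"
    proof
      fix k
      assume k: "k \<in> {1..min (card S) j}"
      then have "k \<in> r ` S"
        using r_bij by (simp add: bij_betw_def)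
      with k show "k \<in> r ` {x\<in>S. r x \<le> j}"
        by auto
    qed
  qed
  moreover have "inj_on r {x\<in>S. r x \<le> j}"
    using bij_betw_imp_inj_on[OF r_bij] by (rule inj_on_subset) auto
  ultimately have card_head: "card {x\<in>S. r x \<le> j} = min (card S) j"
    using card_image by fastforce
  have "card {x\<in>S. g x \<le> j} \<le> card {1..j}"
    using \<open>inj_on g S\<close> g_pos
    by (intro card_inj_on_le[where f = g]) (auto intro: inj_on_subset)
  moreover have "card {x\<in>S. g x \<le> j} \<le> card S"
    using \<open>finite S\<close> by (intro card_mono) auto
  ultimately show "card {x\<in>S. g x \<le> j} \<le> card {x\<in>S. r x \<le> j}"
    by (simp add: card_head)
  show "p y \<le> p x" if "x \<in> {x\<in>S. r x \<le> j}" "y \<in> S - {x\<in>S. r x \<le> j}" for x y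
    using rank that by (auto simp: nonincreasing_ranking_def)
qed (use nonneg in auto)

lemma sum_mult_eq_head_sums:
  fixes p :: "'b \<Rightarrow> real" and f :: "nat \<Rightarrow> real"
  assumes "finite S" and h_le: "\<And>x. x \<in> S \<Longrightarrow> h x \<le> K"
  shows "(\<Sum>x\<in>S. p x * f (h x))
       = f K * sum p S - (\<Sum>j<K. (f (Suc j) - f j) * (\<Sum>x\<in>{x\<in>S. h x \<le> j}. p x))"
proof -
  have telescope: "f (h x) = f K - (\<Sum>j<K. if h x \<le> j then f (Suc j) - f j else 0)"
    if "x \<in> S" for x
  proof -
    have "(\<Sum>j<K. if h x \<le> j then f (Suc j) - f j else 0) = (\<Sum>j\<in>{..<K} \<inter> {h x..}. f (Suc j) - f j)"
      by (simp add: sum.inter_restrict)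
    also have "{..<K} \<inter> {h x..} = {h x..<K}"
      by auto
    also have "(\<Sum>j = h x..<K. f (Suc j) - f j) = f K - f (h x)"
      using h_le[OF that] by (rule sum_Suc_diff')
    finally show ?thesis by simp
  qed
  have "(\<Sum>x\<in>S. p x * f (h x))
      = (\<Sum>x\<in>S. p x * f K - (\<Sum>j<K. p x * (if h x \<le> j then f (Suc j) - f j else 0)))"
    by (intro sum.cong refl) (simp add: telescope right_diff_distrib sum_distrib_left)
  also have "\<dots> = f K * sum p S - (\<Sum>j<K. \<Sum>x\<in>S. p x * (if h x \<le> j then f (Suc j) - f j else 0))"
    by (simp add: sum_subtractf sum_distrib_left sum.swap[of _ S] mult.commute)
  also have "(\<Sum>j<K. \<Sum>x\<in>S. p x * (if h x \<le> j then f (Suc j) - f j else 0))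
      = (\<Sum>j<K. (f (Suc j) - f j) * (\<Sum>x\<in>{x\<in>S. h x \<le> j}. p x))"
    using \<open>finite S\<close> by (auto simp: sum.inter_filter sum_distrib_left intro!: sum.cong)
  finally show ?thesis .
qed

lemma nonincreasing_ranking_minimizes_sum:
  fixes p :: "'b \<Rightarrow> real" and f :: "nat \<Rightarrow> real"
  assumes rank: "nonincreasing_ranking p S r" and "finite S"
    and "\<And>x. x \<in> S \<Longrightarrow> 0 \<le> p x"
    and "inj_on g S" and "\<And>x. x \<in> S \<Longrightarrow> 1 \<le> g x" and "mono f"
  shows "(\<Sum>x\<in>S. p x * f (r x)) \<le> (\<Sum>x\<in>S. p x * f (g x))"
proof -
  define K where "K = max (card S) (Max (g ` S))"
  have r_le: "r x \<le> K" if "x \<in> S" for x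
  proof -
    have "r x \<in> {1..card S}"
      using rank that by (auto simp: nonincreasing_ranking_def bij_betw_def)
    then show ?thesis by (simp add: K_def le_max_iff_disj)
  qed
  have g_le: "g x \<le> K" if "x \<in> S" for x
    using \<open>finite S\<close> that by (auto simp: K_def max.coboundedI2)
  have "(\<Sum>x\<in>S. p x * f (r x))
      = f K * sum p S - (\<Sum>j<K. (f (Suc j) - f j) * (\<Sum>x\<in>{x\<in>S. r x \<le> j}. p x))"
    using \<open>finite S\<close> r_le by (rule sum_mult_eq_head_sums)
  also have "\<dots> \<le> f K * sum p S - (\<Sum>j<K. (f (Suc j) - f j) * (\<Sum>x\<in>{x\<in>S. g x \<le> j}. p x))"
    using \<open>mono f\<close> assms
    by (intro diff_left_mono sum_mono mult_left_mono head_sum_le_ranked_head_sum)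
      (auto simp: monoD)
  also have "\<dots> = (\<Sum>x\<in>S. p x * f (g x))"
    using \<open>finite S\<close> g_le by (rule sum_mult_eq_head_sums[symmetric])
  finally show ?thesis .
qed

definition guessed_at :: "(nat \<Rightarrow> 'a \<times> nat) \<Rightarrow> ('a \<Rightarrow> nat \<Rightarrow> 'x) \<Rightarrow> 'x \<Rightarrow> nat \<Rightarrow> bool" where
  "guessed_at \<pi> g x i \<longleftrightarrow> 1 \<le> i \<and> g (fst (\<pi> i)) (snd (\<pi> i)) = x"

lemma guesswork_pow_altdef:
  "guesswork_pow \<rho> x \<pi> g =
     (if \<exists>i. guessed_at \<pi> g x i then ennreal (real (LEAST i. guessed_at \<pi> g x i) powr \<rho>) else \<infinity>)"
  by (simp add: guesswork_pow_def guessed_at_def)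

lemma inj_on_first_guess:
  "inj_on (\<lambda>x. LEAST i. guessed_at \<pi> g x i) {x. \<exists>i. guessed_at \<pi> g x i}"
proof (rule inj_onI)
  fix x y
  assume "x \<in> {x. \<exists>i. guessed_at \<pi> g x i}" "y \<in> {x. \<exists>i. guessed_at \<pi> g x i}"
    and same: "(LEAST i. guessed_at \<pi> g x i) = (LEAST i. guessed_at \<pi> g y i)"
  then have "guessed_at \<pi> g x (LEAST i. guessed_at \<pi> g x i)"
    and "guessed_at \<pi> g y (LEAST i. guessed_at \<pi> g y i)"
    by (blast intro: LeastI_ex)+
  with same show "x = y"
    by (simp add: guessed_at_def)
qed

lemma guesswork_pow_ge_injective_positions:
  fixes S :: "'x list set"
  assumes "finite S"
  obtains h :: "'x list \<Rightarrow> nat"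
  where "inj_on h S" and "\<And>x. x \<in> S \<Longrightarrow> 1 \<le> h x"
    and "\<And>x. x \<in> S \<Longrightarrow> ennreal (real (h x) powr \<rho>) \<le> guesswork_pow \<rho> x \<pi> g"
proof -
  define F where "F = {x\<in>S. \<exists>i. guessed_at \<pi> g x i}"
  define L where "L x = (LEAST i. guessed_at \<pi> g x i)" for x
  obtain e :: "'x list \<Rightarrow> nat" where "inj_on e S"
    using finite_imp_inj_to_nat_seg[OF \<open>finite S\<close>] by blast
  define h where "h x = (if x \<in> F then L x else Max (L ` F) + Suc (e x))" for x
  have L_guessed: "guessed_at \<pi> g x (L x)" if "x \<in> F" for x
    using that unfolding F_def L_def by (auto intro: LeastI_ex)
  have "finite F"
    using \<open>finite S\<close> by (simp add: F_def)
  have "inj_on h (F \<union> (S - F))"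
    unfolding h_def
  proof (rule inj_on_disjoint_Un)
    show "inj_on L F"
      unfolding L_def using inj_on_first_guess by (rule inj_on_subset) (auto simp: F_def)
    show "inj_on (\<lambda>x. Max (L ` F) + Suc (e x)) (S - F)"
      using \<open>inj_on e S\<close> by (auto simp: inj_on_def)
    have "L x < Max (L ` F) + Suc k" if "x \<in> F" for x k
      using \<open>finite F\<close> that by (simp add: le_imp_less_Suc trans_le_add1)
    then show "L ` F \<inter> (\<lambda>x. Max (L ` F) + Suc (e x)) ` (S - F) = {}"
      by force
  qed
  moreover have "F \<union> (S - F) = S"
    by (auto simp: F_def)
  moreover have "1 \<le> h x" if "x \<in> S" for x
    using L_guessed by (auto simp: h_def guessed_at_def)
  moreover have "ennreal (real (h x) powr \<rho>) \<le> guesswork_pow \<rho> x \<pi> g" if "x \<in> S" for x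
    using that by (auto simp: guesswork_pow_altdef h_def F_def L_def)
  ultimately show thesis
    using that by simp
qed

lemma ranked_sum_le_guesswork_sum:
  fixes S :: "'x list set" and p :: "'x list \<Rightarrow> real"
  assumes rank: "nonincreasing_ranking p S r" and "finite S"
    and nonneg: "\<And>x. x \<in> S \<Longrightarrow> 0 \<le> p x" and "0 \<le> \<rho>"
  shows "ennreal (\<Sum>x\<in>S. p x * real (r x) powr \<rho>)
       \<le> (\<Sum>x\<in>S. ennreal (p x) * guesswork_pow \<rho> x \<pi> g)"
proof -
  obtain h where "inj_on h S" "\<And>x. x \<in> S \<Longrightarrow> 1 \<le> h x"
    and h_le: "\<And>x. x \<in> S \<Longrightarrow> ennreal (real (h x) powr \<rho>) \<le> guesswork_pow \<rho> x \<pi> g"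
    using guesswork_pow_ge_injective_positions[OF \<open>finite S\<close>] by blast
  have "mono (\<lambda>k::nat. real k powr \<rho>)"
    using \<open>0 \<le> \<rho>\<close> by (auto intro!: monoI powr_mono2)
  then have "(\<Sum>x\<in>S. p x * real (r x) powr \<rho>) \<le> (\<Sum>x\<in>S. p x * real (h x) powr \<rho>)"
    using nonincreasing_ranking_minimizes_sum[OF rank \<open>finite S\<close> nonneg \<open>inj_on h S\<close>]
      \<open>\<And>x. x \<in> S \<Longrightarrow> 1 \<le> h x\<close>
    by blast
  then have "ennreal (\<Sum>x\<in>S. p x * real (r x) powr \<rho>)
      \<le> ennreal (\<Sum>x\<in>S. p x * real (h x) powr \<rho>)"
    by (rule ennreal_leI)
  also have "\<dots> = (\<Sum>x\<in>S. ennreal (p x) * ennreal (real (h x) powr \<rho>))"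
    using nonneg by (subst sum_ennreal[symmetric]) (auto simp: ennreal_mult intro!: sum.cong)
  also have "\<dots> \<le> (\<Sum>x\<in>S. ennreal (p x) * guesswork_pow \<rho> x \<pi> g)"
    by (intro sum_mono mult_left_mono h_le) auto
  finally show ?thesis .
qed

lemma orderings_nonempty:
  assumes "A \<noteq> {}" and "countable A"
  shows "orderings A \<noteq> {}"
proof -
  have "infinite (A \<times> {1::nat..})"
    using \<open>A \<noteq> {}\<close> finite_cartesian_productD2 infinite_Ici by blast
  then have "bij_betw (from_nat_into (A \<times> {1::nat..})) UNIV (A \<times> {1..})"
    using \<open>countable A\<close> by (intro bij_betw_from_nat_into) auto
  moreover have "bij_betw (to_nat_on {1::nat..}) {1..} UNIV"
    by (intro to_nat_on_infinite countableI_type infinite_Ici)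
  ultimately have "from_nat_into (A \<times> {1..}) \<circ> to_nat_on {1..} \<in> orderings A"
    unfolding orderings_def by (blast intro: bij_betw_trans)
  then show ?thesis by blast
qed

lemma finite_seqs: "finite (seqs n :: 'x::finite list set)"
proof -
  have "seqs n = {xs. set xs \<subseteq> (UNIV :: 'x set) \<and> length xs = n}"
    by (simp add: seqs_def)
  then show ?thesis
    using finite_lists_length_eq[of "UNIV :: 'x set" n] by simp
qed

lemma seq_prob_nonneg: "0 \<le> seq_prob P xs"
  by (auto simp: seq_prob_def intro!: prod_list_nonneg)

theorem lemma1:
  fixes P :: "'x::finite pmf" and n :: nat and \<rho> :: real
    and A :: "'a set"
    and M :: "'w measure" and guess :: "'w \<Rightarrow> 'a \<Rightarrow> nat \<Rightarrow> 'x list"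
    and r :: "'x list \<Rightarrow> nat"
  assumes "\<rho> > 0"
    and "A \<noteq> {}" and "countable A"
    and "prob_space M"
    and "\<And>a k. a \<in> A \<Longrightarrow> k \<ge> 1 \<Longrightarrow> (\<lambda>w. guess w a k) \<in> measurable M (count_space UNIV)"
    and "\<And>w a k. a \<in> A \<Longrightarrow> k \<ge> 1 \<Longrightarrow> guess w a k \<in> seqs n"
    and "optimal_ranking P n r"
  shows "(SUP \<pi>\<in>orderings A.
            \<integral>\<^sup>+ w. (\<Sum>x\<in>seqs n. ennreal (seq_prob P x) * guesswork_pow \<rho> x \<pi> (guess w)) \<partial>M)
         \<ge> ennreal (\<Sum>x\<in>seqs n. seq_prob P x * real (r x) powr \<rho>)"
proof -
  have rank: "nonincreasing_ranking (seq_prob P) (seqs n) r"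
    using \<open>optimal_ranking P n r\<close> by (simp add: optimal_ranking_def nonincreasing_ranking_def)
  obtain \<pi> where "\<pi> \<in> orderings A"
    using orderings_nonempty[OF \<open>A \<noteq> {}\<close> \<open>countable A\<close>] by blast
  have "ennreal (\<Sum>x\<in>seqs n. seq_prob P x * real (r x) powr \<rho>)
      = (\<integral>\<^sup>+ w. ennreal (\<Sum>x\<in>seqs n. seq_prob P x * real (r x) powr \<rho>) \<partial>M)"
    using prob_space.emeasure_space_1[OF \<open>prob_space M\<close>] by simp
  also have "\<dots> \<le> (\<integral>\<^sup>+ w. (\<Sum>x\<in>seqs n. ennreal (seq_prob P x) * guesswork_pow \<rho> x \<pi> (guess w)) \<partial>M)"
    using \<open>\<rho> > 0\<close>
    by (intro nn_integral_mono ranked_sum_le_guesswork_sum[OF rank finite_seqs seq_prob_nonneg]) simp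
  also have "\<dots> \<le> (SUP \<pi>\<in>orderings A.
            \<integral>\<^sup>+ w. (\<Sum>x\<in>seqs n. ennreal (seq_prob P x) * guesswork_pow \<rho> x \<pi> (guess w)) \<partial>M)"
    using \<open>\<pi> \<in> orderings A\<close> by (rule SUP_upper)
  finally show ?thesis .
qed

end
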